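(* Let $K\in L_2(\mathbb R)$ be a kernel (satisfying the standing assumptions below) with $S_K>0$, and let $f\in L_2(\mathbb R)$ be a probability density with $0<D_f<\infty$. Then for every $n\ge1$, $$n\,\Phi(n,f,K)\le n\,\mathrm{MISE}_f(f_{n,K,S_K/D_f})\le \frac{D_f\,R(K)}{S_K}.$$
   Context: A kernel is an integrable function $K:\mathbb R\to\mathbb R$ with $\int K=1$; standing assumptions: $K$ is bounded, continuous at $0$, and $\int K^2<2K(0)$. For a sample $X_1,\dots,X_n$ i.i.d. with density $f$, bandwidth $h>0$, $f_{n,K,h}(x)=\frac1n\sum_{i=1}^n K_h(x-X_i)$ with $K_h(x)=K(x/h)/h$. $\mathrm{MISE}_f(f_{n,K,h})=E_f\int (f_{n,K,h}-f)^2$, and $\Phi(n,f,K)=\min_{h>0}\mathrm{MISE}_f(f_{n,K,h})$. $R(g)=\int g(x)^2dx$. $\varphi_K(t)=\int e^{itx}K(x)dx$, $\varphi_f(t)=\int e^{itx}f(x)dx$, $S_K=\inf\{t\ge0:|\varphi_K(t)-1|\ne0\}$, $D_f=\sup\{t\ge0:\varphi_f(t)\ne0\}$. *)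

theory Defs
  imports "HOL-Probability.Probability"
begin

definition is_kernel :: "(real \<Rightarrow> real) \<Rightarrow> bool" where
  "is_kernel K \<longleftrightarrow> integrable lborel K \<and> integral\<^sup>L lborel K = 1
     \<and> (\<exists>B. \<forall>x. \<bar>K x\<bar> \<le> B) \<and> isCont K 0
     \<and> integrable lborel (\<lambda>x. (K x)\<^sup>2)
     \<and> integral\<^sup>L lborel (\<lambda>x. (K x)\<^sup>2) < 2 * K 0"

definition is_density :: "(real \<Rightarrow> real) \<Rightarrow> bool" where
  "is_density f \<longleftrightarrow> f \<in> borel_measurable borel \<and> (\<forall>x. 0 \<le> f x)
     \<and> integrable lborel f \<and> integral\<^sup>L lborel f = 1"

definition Rsq :: "(real \<Rightarrow> real) \<Rightarrow> real" where
  "Rsq g = integral\<^sup>L lborel (\<lambda>x. (g x)\<^sup>2)"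

definition phi :: "(real \<Rightarrow> real) \<Rightarrow> real \<Rightarrow> complex" where
  "phi g t = integral\<^sup>L lborel (\<lambda>x. cis (t * x) * complex_of_real (g x))"

text \<open>S_K = inf{t \<ge> 0 : |phi_K(t) - 1| \<noteq> 0} (the set is nonempty by Riemann-Lebesgue).\<close>
definition S_K :: "(real \<Rightarrow> real) \<Rightarrow> real" where
  "S_K K = Inf {t. 0 \<le> t \<and> cmod (phi K t - 1) \<noteq> 0}"

definition D_f :: "(real \<Rightarrow> real) \<Rightarrow> ereal" where
  "D_f f = (SUP t \<in> {t. 0 \<le> t \<and> phi f t \<noteq> 0}. ereal t)"

definition kde :: "nat \<Rightarrow> (real \<Rightarrow> real) \<Rightarrow> real \<Rightarrow> (nat \<Rightarrow> real) \<Rightarrow> real \<Rightarrow> real" where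
  "kde n K h X x = (1 / real n) * (\<Sum>i<n. K ((x - X i) / h) / h)"

definition sample_law :: "nat \<Rightarrow> (real \<Rightarrow> real) \<Rightarrow> (nat \<Rightarrow> real) measure" where
  "sample_law n f = (\<Pi>\<^sub>M i\<in>{..<n}. density lborel (\<lambda>x. ennreal (f x)))"

definition MISE :: "nat \<Rightarrow> (real \<Rightarrow> real) \<Rightarrow> (real \<Rightarrow> real) \<Rightarrow> real \<Rightarrow> ennreal" where
  "MISE n f K h = (\<integral>\<^sup>+ X. (\<integral>\<^sup>+ x. ennreal ((kde n K h X x - f x)\<^sup>2) \<partial>lborel) \<partial>sample_law n f)"

text \<open>Phi(n,f,K) = min over h > 0 of the MISE (written as an infimum).\<close>
definition Phi :: "nat \<Rightarrow> (real \<Rightarrow> real) \<Rightarrow> (real \<Rightarrow> real) \<Rightarrow> ennreal" where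
  "Phi n f K = (INF h \<in> {0<..}. MISE n f K h)"

end

theory Submission
  imports Defs
begin

(* The MISE splits into an integrated squared bias
   \<integral> (K_h * f - f)^2 and a variance term bounded by R(K) / (n h), where
   K_h * f = E f_{n,K,h} is the convolution of the rescaled kernel with f.
   The bias vanishes for h = S_K / D_f: in Fourier space the convolution becomes
   the product phi K (t h) phi f t, and phi K (t h) = 1 wherever phi f t \<noteq> 0
   (except possibly at t = \<plusminus>D_f), so by continuity and Fourier uniqueness
   K_h * f = f almost everywhere.  Hence n MISE \<le> R(K) / h = D_f R(K) / S_K, and
   Phi, being an infimum over all bandwidths, is at most the MISE at this h. *)

lemma phi_integrable:
  fixes g :: "real \<Rightarrow> real"
  assumes "integrable lborel g"
  shows "integrable lborel (\<lambda>x. cis (t * x) * complex_of_real (g x))"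
proof (rule Bochner_Integration.integrable_bound[OF integrable_norm[OF assms]])
  have [measurable]: "g \<in> borel_measurable borel"
    using borel_measurable_integrable[OF assms] by simp
  show "(\<lambda>x. cis (t * x) * complex_of_real (g x)) \<in> borel_measurable lborel"
    unfolding cis_conv_exp by measurable
qed (auto simp: norm_mult)

lemma phi_add:
  assumes "integrable lborel g1" "integrable lborel g2"
  shows "phi (\<lambda>x. g1 x + g2 x) t = phi g1 t + phi g2 t"
  unfolding phi_def
  by (simp add: distrib_left Bochner_Integration.integral_add phi_integrable assms)

lemma phi_diff:
  assumes "integrable lborel g1" "integrable lborel g2"
  shows "phi (\<lambda>x. g1 x - g2 x) t = phi g1 t - phi g2 t"
  unfolding phi_def
  by (simp add: right_diff_distrib Bochner_Integration.integral_diff phi_integrable assms)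

lemma phi_divide: "phi (\<lambda>x. g x / c) t = phi g t / complex_of_real c"
  unfolding phi_def by (simp add: of_real_divide times_divide_eq_right flip: integral_divide_zero)

lemma phi_zero: "phi g 0 = complex_of_real (integral\<^sup>L lborel g)"
  unfolding phi_def by simp

(* For real g the transform satisfies phi g (-t) = conj (phi g t), so properties
   of phi on [0, \<infinity>) transfer to the whole line. *)
lemma phi_uminus: "phi g (-t) = cnj (phi g t)"
proof -
  have "phi g (-t) = (\<integral>x. cnj (cis (t * x) * complex_of_real (g x)) \<partial>lborel)"
    unfolding phi_def by (intro Bochner_Integration.integral_cong) (auto simp: cis_cnj)
  also have "\<dots> = cnj (phi g t)" unfolding phi_def by (rule Bochner_Integration.integral_cnj)
  finally show ?thesis .
qed

lemma phi_isCont: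
  assumes "integrable lborel g"
  shows "isCont (phi g) t"
  unfolding continuous_at_sequentially
proof safe
  have [measurable]: "g \<in> borel_measurable borel"
    using borel_measurable_integrable[OF assms] by simp
  fix s assume s: "s \<longlonglongrightarrow> t"
  show "(phi g \<circ> s) \<longlonglongrightarrow> phi g t"
    unfolding comp_def phi_def
    by (rule integral_dominated_convergence[where w="\<lambda>x. norm (g x)"])
       (auto simp: norm_mult cis_conv_exp intro!: tendsto_intros s assms)
qed

lemma phi_eq_char:
  fixes g :: "real \<Rightarrow> real"
  assumes [measurable]: "g \<in> borel_measurable borel" and "\<And>x. 0 \<le> g x"
  shows "char (density lborel (\<lambda>x. ennreal (g x))) t = phi g t"
proof -
  have "char (density lborel (\<lambda>x. ennreal (g x))) t = (\<integral>x. g x *\<^sub>R iexp (t * x) \<partial>lborel)"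
    unfolding char_def using assms(2) by (subst integral_density) auto
  also have "\<dots> = phi g t" unfolding phi_def
    by (intro Bochner_Integration.integral_cong) (auto simp: cis_conv_exp scaleR_conv_of_real mult_ac)
  finally show ?thesis .
qed

(* Fourier uniqueness for nonnegative integrable functions: after normalising to
   probability densities this is Levy's uniqueness theorem for characteristic
   functions; the degenerate case of zero mass is handled separately. *)
lemma phi_unique_nonneg:
  fixes g1 g2 :: "real \<Rightarrow> real"
  assumes g1: "integrable lborel g1" "\<And>x. 0 \<le> g1 x"
    and g2: "integrable lborel g2" "\<And>x. 0 \<le> g2 x"
    and eq: "phi g1 = phi g2"
  shows "AE x in lborel. g1 x = g2 x"
proof -
  have [measurable]: "g1 \<in> borel_measurable borel" "g2 \<in> borel_measurable borel"
    using g1(1) g2(1) by (simp_all add: borel_measurable_integrable)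
  define c where "c = integral\<^sup>L lborel g1"
  have c2: "integral\<^sup>L lborel g2 = c"
    using arg_cong[OF eq, of "\<lambda>F. F 0"] by (simp add: phi_zero c_def)
  show ?thesis
  proof (cases "c = 0")
    case True
    have "AE x in lborel. g1 x = 0"
      using True g1 by (simp add: c_def integral_nonneg_eq_0_iff_AE)
    moreover have "AE x in lborel. g2 x = 0"
      using True c2 g2 by (simp add: integral_nonneg_eq_0_iff_AE)
    ultimately show ?thesis by eventually_elim simp
  next
    case False
    then have c0: "c > 0" using g1 by (simp add: c_def order_neq_le_trans)
    have distr: "real_distribution (density lborel (\<lambda>x. ennreal (g x / c)))"
      if "integrable lborel g" "\<And>x. 0 \<le> g x" "integral\<^sup>L lborel g = c" for g
    proof -
      have [measurable]: "g \<in> borel_measurable borel"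
        using that(1) by (simp add: borel_measurable_integrable)
      have "(\<integral>\<^sup>+x. ennreal (g x / c) \<partial>lborel) = ennreal (integral\<^sup>L lborel (\<lambda>x. g x / c))"
        using that c0 by (intro nn_integral_eq_integral) auto
      also have "\<dots> = 1" using that c0 by simp
      finally show ?thesis
        by (auto simp: real_distribution_def real_distribution_axioms_def emeasure_density
                 intro!: prob_spaceI)
    qed
    have char_eq: "char (density lborel (\<lambda>x. ennreal (g1 x / c)))
                 = char (density lborel (\<lambda>x. ennreal (g2 x / c)))"
    proof
      fix t
      have "phi (\<lambda>x. g1 x / c) t = phi (\<lambda>x. g2 x / c) t"
        using eq by (simp add: phi_divide)
      then show "char (density lborel (\<lambda>x. ennreal (g1 x / c))) t
               = char (density lborel (\<lambda>x. ennreal (g2 x / c))) t"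
        using g1 g2 c0 by (simp add: phi_eq_char)
    qed
    have "density lborel (\<lambda>x. ennreal (g1 x / c)) = density lborel (\<lambda>x. ennreal (g2 x / c))"
      by (rule Levy_uniqueness[OF distr[OF g1 c_def[symmetric]] distr[OF g2 c2] char_eq])
    then have "AE x in lborel. ennreal (g1 x / c) = ennreal (g2 x / c)"
      by (intro sigma_finite_measure.density_unique[OF sigma_finite_lborel]) auto
    then show ?thesis
      by eventually_elim (use g1 g2 c0 in \<open>auto simp: ennreal_inj\<close>)
  qed
qed

(* Reduce to the nonnegative case by moving
   the negative parts of g1 and g2 to the opposite side. *)
lemma phi_unique:
  fixes g1 g2 :: "real \<Rightarrow> real"
  assumes g1: "integrable lborel g1" and g2: "integrable lborel g2" and eq: "phi g1 = phi g2"
  shows "AE x in lborel. g1 x = g2 x"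
proof -
  define v where "v = (\<lambda>x. max (g2 x) 0 + max (- g1 x) 0)"
  define u where "u = (\<lambda>x. g1 x - g2 x + v x)"
  have u_alt: "u x = max (g1 x) 0 + max (- g2 x) 0" for x
    by (auto simp: u_def v_def)
  have v_int: "integrable lborel v"
    unfolding v_def using g1 g2 by auto
  have u_int: "integrable lborel u"
    unfolding u_def using g1 g2 v_int by auto
  have "phi u = phi v"
  proof
    fix t
    have "phi u t = phi g1 t - phi g2 t + phi v t"
      unfolding u_def using g1 g2 v_int by (simp add: phi_add phi_diff)
    then show "phi u t = phi v t" using eq by simp
  qed
  moreover have "0 \<le> u x" "0 \<le> v x" for x
    by (auto simp: u_alt v_def)
  ultimately have "AE x in lborel. u x = v x"
    using phi_unique_nonneg[OF u_int _ v_int] by blast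
  then show ?thesis by eventually_elim (simp add: u_def)
qed

(* The expected value of the kernel density estimator at x:
   smoothed K h f x = E f_{n,K,h}(x) = (K_h * f)(x), the convolution of the
   rescaled kernel K_h(u) = K(u/h)/h with f. *)
definition smoothed :: "(real \<Rightarrow> real) \<Rightarrow> real \<Rightarrow> (real \<Rightarrow> real) \<Rightarrow> real \<Rightarrow> real" where
  "smoothed K h f x = (\<integral>y. K ((x - y) / h) / h * f y \<partial>lborel)"

lemma integrable_rescaled:
  fixes K :: "real \<Rightarrow> real"
  assumes "integrable lborel K" "h > 0"
  shows "integrable lborel (\<lambda>x. K ((x - y) / h) / h)"
proof -
  have "integrable lborel (\<lambda>x. K (- y / h + (1 / h) * x))"
    using assms by (subst lborel_integrable_real_affine_iff) auto
  then show ?thesis by (simp add: diff_divide_distrib)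
qed

lemma integral_rescaled:
  fixes K :: "real \<Rightarrow> real"
  assumes "h > 0"
  shows "(\<integral>x. K ((x - y) / h) / h \<partial>lborel) = integral\<^sup>L lborel K"
  using lborel_integral_real_affine[of h "\<lambda>x. K ((x - y) / h) / h" y] assms by simp

lemma phi_rescaled:
  fixes K :: "real \<Rightarrow> real"
  assumes "h > 0"
  shows "(\<integral>x. cis (t * x) * complex_of_real (K ((x - y) / h) / h) \<partial>lborel)
       = cis (t * y) * phi K (t * h)"
proof -
  have "(\<integral>x. cis (t * x) * complex_of_real (K ((x - y) / h) / h) \<partial>lborel)
      = h *\<^sub>R (\<integral>u. cis (t * (y + h * u)) * complex_of_real (K u / h) \<partial>lborel)"
    using lborel_integral_real_affine[of h "\<lambda>x. cis (t * x) * complex_of_real (K ((x - y) / h) / h)" y]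
      assms by simp
  also have "\<dots> = (\<integral>u. cis (t * y) * (cis (t * h * u) * complex_of_real (K u)) \<partial>lborel)"
  proof -
    have "h *\<^sub>R (cis (t * (y + h * u)) * complex_of_real (K u / h))
        = cis (t * y) * (cis (t * h * u) * complex_of_real (K u))" for u
      using assms by (simp add: scaleR_conv_of_real of_real_divide cis_mult distrib_left mult_ac)
    then show ?thesis by (simp only: integral_scaleR_right[symmetric] integral_mult_right_zero)
  qed
  also have "\<dots> = cis (t * y) * phi K (t * h)"
    unfolding phi_def by simp
  finally show ?thesis .
qed

(* (y, x) \<mapsto> K_h(x - y) f(y) is integrable on the plane: by Tonelli its L1 norm is
   ||K||_1 ||f||_1.  This licenses Fubini in the convolution theorem below. *)
lemma smoothing_integrable_pair:
  fixes K f :: "real \<Rightarrow> real"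
  assumes K: "integrable lborel K" and f: "integrable lborel f" and h: "h > 0"
  shows "integrable (lborel \<Otimes>\<^sub>M lborel) (\<lambda>(y, x). K ((x - y) / h) / h * f y)"
proof -
  have [measurable]: "K \<in> borel_measurable borel" "f \<in> borel_measurable borel"
    using K f by (simp_all add: borel_measurable_integrable)
  have inner: "(\<integral>x. norm (K ((x - y) / h) / h * f y) \<partial>lborel) = (\<integral>u. norm (K u) \<partial>lborel) * norm (f y)"
    for y
  proof -
    have "(\<integral>x. norm (K ((x - y) / h) / h * f y) \<partial>lborel)
        = (\<integral>x. norm (K ((x - y) / h)) / h \<partial>lborel) * norm (f y)"
      using h by (simp add: abs_mult)
    also have "\<dots> = (\<integral>u. norm (K u) \<partial>lborel) * norm (f y)"
      using integral_rescaled[OF h, of "\<lambda>u. norm (K u)" y] by simp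
    finally show ?thesis .
  qed
  show ?thesis
  proof (rule lborel_pair.Fubini_integrable)
    have "integrable lborel (\<lambda>y. (\<integral>u. norm (K u) \<partial>lborel) * norm (f y))"
      using f by auto
    then show "integrable lborel (\<lambda>y. \<integral>x. norm (case (y, x) of (y, x) \<Rightarrow> K ((x - y) / h) / h * f y) \<partial>lborel)"
      by (simp only: prod.case inner)
    have "integrable lborel (\<lambda>x. K ((x - y) / h) / h * f y)" for y
      using integrable_rescaled[OF K h] by (rule integrable_mult_left)
    then show "AE y in lborel. integrable lborel (\<lambda>x. case (y, x) of (y, x) \<Rightarrow> K ((x - y) / h) / h * f y)"
      by simp
  qed measurable
qed

lemma phi_smoothed:
  fixes K f :: "real \<Rightarrow> real"
  assumes K: "integrable lborel K" and f: "integrable lborel f" and h: "h > 0"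
  shows "integrable lborel (smoothed K h f)"
    and "phi (smoothed K h f) t = phi K (t * h) * phi f t"
proof -
  have [measurable]: "K \<in> borel_measurable borel" "f \<in> borel_measurable borel"
    using K f by (simp_all add: borel_measurable_integrable)
  define G where "G y x = K ((x - y) / h) / h * f y" for y x
  have G_int: "integrable (lborel \<Otimes>\<^sub>M lborel) (\<lambda>(y, x). G y x)"
    unfolding G_def by (rule smoothing_integrable_pair[OF K f h])
  have sm: "smoothed K h f x = (\<integral>y. G y x \<partial>lborel)" for x
    by (simp add: smoothed_def G_def)
  show "integrable lborel (smoothed K h f)"
    unfolding sm using lborel_pair.integrable_snd[OF G_int] .
  have F_int: "integrable (lborel \<Otimes>\<^sub>M lborel) (\<lambda>(y, x). cis (t * x) * complex_of_real (G y x))"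
  proof (rule Bochner_Integration.integrable_bound[OF integrable_norm[OF G_int]])
    show "(\<lambda>(y, x). cis (t * x) * complex_of_real (G y x)) \<in> borel_measurable (lborel \<Otimes>\<^sub>M lborel)"
      unfolding cis_conv_exp G_def by measurable
  qed (auto simp: norm_mult split: prod.split)
  have "phi (smoothed K h f) t = (\<integral>x. \<integral>y. cis (t * x) * complex_of_real (G y x) \<partial>lborel \<partial>lborel)"
    unfolding phi_def sm by (simp only: integral_mult_right_zero integral_complex_of_real)
  also have "\<dots> = (\<integral>y. \<integral>x. cis (t * x) * complex_of_real (G y x) \<partial>lborel \<partial>lborel)"
    using lborel_pair.Fubini_integral[OF F_int] by simp
  also have "\<dots> = (\<integral>y. phi K (t * h) * (cis (t * y) * complex_of_real (f y)) \<partial>lborel)"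
  proof (intro Bochner_Integration.integral_cong refl)
    fix y
    have "(\<integral>x. cis (t * x) * complex_of_real (G y x) \<partial>lborel)
        = (\<integral>x. cis (t * x) * complex_of_real (K ((x - y) / h) / h) \<partial>lborel) * complex_of_real (f y)"
      by (simp add: G_def mult.assoc flip: integral_mult_left_zero)
    also have "\<dots> = cis (t * y) * phi K (t * h) * complex_of_real (f y)"
      by (simp only: phi_rescaled[OF h])
    finally show "(\<integral>x. cis (t * x) * complex_of_real (G y x) \<partial>lborel)
        = phi K (t * h) * (cis (t * y) * complex_of_real (f y))"
      by (simp only: mult_ac)
  qed
  also have "\<dots> = phi K (t * h) * phi f t"
    unfolding phi_def by simp
  finally show "phi (smoothed K h f) t = phi K (t * h) * phi f t" .
qed

lemma phi_kernel_flat: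
  assumes "\<bar>s\<bar> < S_K K"
  shows "phi K s = 1"
proof -
  have flat: "phi K s = 1" if "0 \<le> s" "s < S_K K" for s
  proof (rule ccontr)
    assume "phi K s \<noteq> 1"
    then have "S_K K \<le> s" unfolding S_K_def
      using that(1) by (intro cInf_lower) (auto intro!: bdd_belowI[where m=0])
    then show False using that(2) by simp
  qed
  show ?thesis
  proof (cases "0 \<le> s")
    case True
    then show ?thesis using assms flat by simp
  next
    case False
    then have "phi K (-s) = 1" using assms by (intro flat) auto
    then show ?thesis using phi_uminus[of K "-s"] by simp
  qed
qed

lemma phi_band_limited:
  assumes "D_f f = ereal D" and "phi f t \<noteq> 0"
  shows "\<bar>t\<bar> \<le> D"
proof -
  have bound: "s \<le> D" if "0 \<le> s" "phi f s \<noteq> 0" for s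
  proof -
    have "ereal s \<le> D_f f" unfolding D_f_def using that by (intro SUP_upper) auto
    then show ?thesis using assms(1) by simp
  qed
  show ?thesis
  proof (cases "0 \<le> t")
    case True
    then show ?thesis using bound assms(2) by simp
  next
    case False
    have "phi f (-t) \<noteq> 0" using assms(2) phi_uminus[of f t] by auto
    then show ?thesis using bound[of "-t"] False by simp
  qed
qed

lemma continuous_eq_off_finite:
  fixes F G :: "'a::{perfect_space, t2_space} \<Rightarrow> 'b::t2_space"
  assumes "\<And>t. isCont F t" "\<And>t. isCont G t" "finite A" "\<And>t. t \<notin> A \<Longrightarrow> F t = G t"
  shows "F = G"
proof
  fix t
  have "eventually (\<lambda>x. \<forall>a\<in>A. x \<noteq> a) (at t)"
    using \<open>finite A\<close> by (simp add: eventually_ball_finite_distrib eventually_neq_at_within)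
  then have "eventually (\<lambda>x. F x = G x) (at t)"
    by eventually_elim (use assms(4) in blast)
  with assms(1)[of t] have "(G \<longlongrightarrow> F t) (at t)"
    unfolding isCont_def by (rule Lim_transform_eventually)
  moreover have "(G \<longlongrightarrow> G t) (at t)"
    using assms(2)[of t] unfolding isCont_def .
  ultimately show "F t = G t" by (rule LIM_unique)
qed

(* Indeed
   phi (K_h * f) t = phi K (t h) phi f t equals phi f t for |t| \<noteq> D_f, since either
   phi f t = 0 or |t h| < S_K; by continuity the transforms agree everywhere, and
   Fourier uniqueness concludes. *)
lemma smoothed_unbiased:
  fixes K f :: "real \<Rightarrow> real"
  assumes K: "integrable lborel K" and f: "integrable lborel f"
    and D: "D_f f = ereal D" and h: "h > 0" "h * D \<le> S_K K"
  shows "AE x in lborel. smoothed K h f x = f x"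
proof (rule phi_unique[OF phi_smoothed(1)[OF K f h(1)] f])
  have "phi (smoothed K h f) t = phi f t" if "t \<notin> {D, -D}" for t
  proof (cases "phi f t = 0")
    case False
    then have "\<bar>t\<bar> < D" using phi_band_limited[OF D] that by force
    then have "\<bar>t\<bar> * h < D * h"
      using h(1) by (rule mult_strict_right_mono)
    moreover have "\<bar>t * h\<bar> = \<bar>t\<bar> * h"
      using h(1) by (simp add: abs_mult)
    ultimately have "\<bar>t * h\<bar> < S_K K"
      using h(2) by (simp add: mult.commute)
    then show ?thesis by (simp add: phi_smoothed(2)[OF K f h(1)] phi_kernel_flat)
  qed (simp add: phi_smoothed(2)[OF K f h(1)])
  then show "phi (smoothed K h f) = phi f"
    by (intro continuous_eq_off_finite[of _ _ "{D, -D}"] phi_isCont phi_smoothed(1)[OF K f h(1)] f)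
       auto
qed

lemma product_integral_component:
  fixes g :: "'a \<Rightarrow> real"
  assumes "prob_space M" "finite I" "i \<in> I" "integrable M g"
  shows "(\<integral>X. g (X i) \<partial>Pi\<^sub>M I (\<lambda>_. M)) = integral\<^sup>L M g"
proof -
  interpret prob_space M by fact
  interpret product_sigma_finite "\<lambda>_. M" by unfold_locales
  define F where "F = (\<lambda>k. if k = i then g else (\<lambda>_. 1::real))"
  have "(\<integral>X. (\<Prod>k\<in>I. F k (X k)) \<partial>Pi\<^sub>M I (\<lambda>_. M)) = (\<Prod>k\<in>I. integral\<^sup>L M (F k))"
    by (rule product_integral_prod) (use assms in \<open>auto simp: F_def\<close>)
  moreover have "(\<Prod>k\<in>I. F k (X k)) = g (X i)" for X
    using assms(2,3) by (simp add: F_def prod.remove[of I i])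
  moreover have "(\<Prod>k\<in>I. integral\<^sup>L M (F k)) = integral\<^sup>L M g"
    using assms(2,3) by (simp add: F_def prod.remove[of I i] prob_space)
  ultimately show ?thesis by simp
qed

lemma product_integral_two_components:
  fixes g1 g2 :: "'a \<Rightarrow> real"
  assumes "prob_space M" "finite I" "i \<in> I" "j \<in> I" "i \<noteq> j" "integrable M g1" "integrable M g2"
  shows "(\<integral>X. g1 (X i) * g2 (X j) \<partial>Pi\<^sub>M I (\<lambda>_. M)) = integral\<^sup>L M g1 * integral\<^sup>L M g2"
proof -
  interpret prob_space M by fact
  interpret product_sigma_finite "\<lambda>_. M" by unfold_locales
  define F where "F = (\<lambda>k. if k = i then g1 else if k = j then g2 else (\<lambda>_. 1::real))"
  have "(\<integral>X. (\<Prod>k\<in>I. F k (X k)) \<partial>Pi\<^sub>M I (\<lambda>_. M)) = (\<Prod>k\<in>I. integral\<^sup>L M (F k))"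
    by (rule product_integral_prod) (use assms in \<open>auto simp: F_def\<close>)
  moreover have "(\<Prod>k\<in>I. F k (X k)) = g1 (X i) * g2 (X j)" for X
    using assms(2-5) by (simp add: F_def prod.remove[of I i] prod.remove[of "I - {i}" j])
  moreover have "(\<Prod>k\<in>I. integral\<^sup>L M (F k)) = integral\<^sup>L M g1 * integral\<^sup>L M g2"
    using assms(2-5) by (simp add: F_def prod.remove[of I i] prod.remove[of "I - {i}" j] prob_space)
  ultimately show ?thesis by simp
qed

lemma sample_mean_mse:
  fixes Y :: "'a \<Rightarrow> real"
  assumes M: "prob_space M" and Y[measurable]: "Y \<in> borel_measurable M"
    and Y_bound: "\<And>v. \<bar>Y v\<bar> \<le> C" and n: "n \<ge> 1"
  defines "P \<equiv> Pi\<^sub>M {..<n} (\<lambda>_. M)"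
  shows "(\<integral>\<^sup>+X. ennreal (((1 / real n) * (\<Sum>i<n. Y (X i)) - c)\<^sup>2) \<partial>P)
       = ennreal ((integral\<^sup>L M Y - c)\<^sup>2 + ((\<integral>v. (Y v)\<^sup>2 \<partial>M) - (integral\<^sup>L M Y)\<^sup>2) / n)"
proof -
  interpret M: prob_space M by fact
  interpret P: prob_space P unfolding P_def by (intro prob_space_PiM M)
  define \<mu> where "\<mu> = integral\<^sup>L M Y"
  define m2 where "m2 = (\<integral>v. (Y v)\<^sup>2 \<partial>M)"
  have C: "0 \<le> C" using Y_bound[of undefined] by simp
  have YY_bound: "\<bar>Y u * Y v\<bar> \<le> C * C" for u v
    using mult_mono[OF Y_bound[of u] Y_bound[of v] C abs_ge_zero] by (simp add: abs_mult)
  have Y_int: "integrable M Y"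
    by (rule M.integrable_const_bound[where B=C]) (use Y_bound in auto)
  have Y2_int: "integrable M (\<lambda>v. (Y v)\<^sup>2)"
  proof (rule M.integrable_const_bound[where B="C * C"])
    have "norm ((Y v)\<^sup>2) \<le> C * C" for v
      using YY_bound[of v v] by (simp add: power2_eq_square)
    then show "AE v in M. norm ((Y v)\<^sup>2) \<le> C * C" by simp
  qed simp
  have comp_meas[measurable]: "(\<lambda>X. Y (X i)) \<in> borel_measurable P" if "i < n" for i
  proof -
    have "(\<lambda>X. X i) \<in> P \<rightarrow>\<^sub>M M"
      using measurable_component_singleton[of i "{..<n}" "\<lambda>_. M"] that by (simp add: P_def)
    then show ?thesis by (rule measurable_compose) (rule Y)
  qed
  have first: "(\<integral>X. Y (X i) \<partial>P) = \<mu>" if "i < n" for i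
    unfolding P_def \<mu>_def using that by (intro product_integral_component[OF M _ _ Y_int]) auto
  have second: "(\<integral>X. Y (X i) * Y (X j) \<partial>P) = (if i = j then m2 else \<mu>\<^sup>2)" if "i < n" "j < n" for i j
    using that product_integral_component[OF M _ _ Y2_int, of "{..<n}" i]
      product_integral_two_components[OF M _ _ _ _ Y_int Y_int, of "{..<n}" i j]
    by (auto simp: P_def m2_def \<mu>_def power2_eq_square)
  have int1: "integrable P (\<lambda>X. Y (X i))" if "i < n" for i
    by (rule P.integrable_const_bound[where B=C]) (use Y_bound that in auto)
  have int2: "integrable P (\<lambda>X. Y (X i) * Y (X j))" if "i < n" "j < n" for i j
    by (rule P.integrable_const_bound[where B="C * C"]) (use YY_bound that in auto)
  have expand: "((1 / real n) * (\<Sum>i<n. Y (X i)) - c)\<^sup>2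
      = (1 / real n)\<^sup>2 * (\<Sum>i<n. \<Sum>j<n. Y (X i) * Y (X j)) - 2 * c / n * (\<Sum>i<n. Y (X i)) + c\<^sup>2" for X
    by (simp add: power2_eq_square sum_product algebra_simps)
  have sum1_int: "integrable P (\<lambda>X. \<Sum>i<n. Y (X i))"
    using int1 by (intro Bochner_Integration.integrable_sum) auto
  have sum2_int: "integrable P (\<lambda>X. \<Sum>i<n. \<Sum>j<n. Y (X i) * Y (X j))"
    using int2 by (intro Bochner_Integration.integrable_sum) auto
  have sq_int: "integrable P (\<lambda>X. ((1 / real n) * (\<Sum>i<n. Y (X i)) - c)\<^sup>2)"
    unfolding expand using sum1_int sum2_int by simp
  have E1: "(\<integral>X. (\<Sum>i<n. Y (X i)) \<partial>P) = (\<Sum>i<n. \<mu>)"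
    using int1 first by (subst Bochner_Integration.integral_sum) auto
  have E2: "(\<integral>X. (\<Sum>i<n. \<Sum>j<n. Y (X i) * Y (X j)) \<partial>P) = (\<Sum>i<n. \<Sum>j<n. if i = j then m2 else \<mu>\<^sup>2)"
  proof -
    have "(\<integral>X. (\<Sum>i<n. \<Sum>j<n. Y (X i) * Y (X j)) \<partial>P) = (\<Sum>i<n. \<integral>X. (\<Sum>j<n. Y (X i) * Y (X j)) \<partial>P)"
      using int2 by (intro Bochner_Integration.integral_sum) auto
    also have "\<dots> = (\<Sum>i<n. \<Sum>j<n. \<integral>X. Y (X i) * Y (X j) \<partial>P)"
      using int2 by (intro sum.cong refl Bochner_Integration.integral_sum) auto
    finally show ?thesis by (simp add: second)
  qed
  have "(\<integral>X. ((1 / real n) * (\<Sum>i<n. Y (X i)) - c)\<^sup>2 \<partial>P)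
      = (1 / real n)\<^sup>2 * (\<Sum>i<n. \<Sum>j<n. if i = j then m2 else \<mu>\<^sup>2) - 2 * c / n * (\<Sum>i<n. \<mu>) + c\<^sup>2"
    unfolding expand using sum1_int sum2_int by (simp add: E1 E2 P.prob_space)
  also have "(\<Sum>i<n. \<Sum>j<n. if i = j then m2 else \<mu>\<^sup>2) = real n * m2 + (real n * real n - real n) * \<mu>\<^sup>2"
  proof -
    have "(\<Sum>i<n. \<Sum>j<n. if i = j then m2 else \<mu>\<^sup>2) = (\<Sum>i<n. \<Sum>j<n. \<mu>\<^sup>2 + (if i = j then m2 - \<mu>\<^sup>2 else 0))"
      by (intro sum.cong) auto
    then show ?thesis by (simp add: sum.distrib algebra_simps)
  qed
  also have "(1 / real n)\<^sup>2 * (real n * m2 + (real n * real n - real n) * \<mu>\<^sup>2) - 2 * c / n * (\<Sum>i<n. \<mu>) + c\<^sup>2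
      = (\<mu> - c)\<^sup>2 + (m2 - \<mu>\<^sup>2) / n"
    using n by (simp add: field_simps power2_eq_square)
  finally show ?thesis
    using sq_int by (subst nn_integral_eq_integral) (auto simp: \<mu>_def m2_def)
qed

lemma prob_space_density:
  assumes "is_density f"
  shows "prob_space (density lborel (\<lambda>x. ennreal (f x)))"
proof -
  have [measurable]: "f \<in> borel_measurable borel" and "integrable lborel f" "\<And>x. 0 \<le> f x"
    and "integral\<^sup>L lborel f = 1"
    using assms unfolding is_density_def by auto
  then have "(\<integral>\<^sup>+y. ennreal (f y) \<partial>lborel) = 1"
    by (subst nn_integral_eq_integral) auto
  then show ?thesis by (intro prob_spaceI) (simp add: emeasure_density)
qed

(* Pointwise bias-variance bound for the kernel density estimator, obtained from
   sample_mean_mse with Y(v) = K_h(x - v); the variance is bounded by the second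
   moment E K_h(x - X)^2 / n. *)
lemma kde_pointwise_mse:
  fixes K f :: "real \<Rightarrow> real"
  assumes K[measurable]: "K \<in> borel_measurable borel" and K_bound: "\<And>u. \<bar>K u\<bar> \<le> B"
    and f: "is_density f" and h: "h > 0" and n: "n \<ge> 1"
  shows "(\<integral>\<^sup>+X. ennreal ((kde n K h X x - f x)\<^sup>2) \<partial>sample_law n f)
       \<le> ennreal ((smoothed K h f x - f x)\<^sup>2)
         + ennreal (1 / real n) * (\<integral>\<^sup>+v. ennreal (f v * (K ((x - v) / h) / h)\<^sup>2) \<partial>lborel)"
proof -
  have [measurable]: "f \<in> borel_measurable borel" and f_nonneg: "\<And>v. 0 \<le> f v"
    using f unfolding is_density_def by auto
  define M where "M = density lborel (\<lambda>v. ennreal (f v))"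
  have M: "prob_space M" unfolding M_def using f by (rule prob_space_density)
  interpret M: prob_space M by (rule M)
  define Y where "Y v = K ((x - v) / h) / h" for v
  have Y_meas: "Y \<in> borel_measurable M" unfolding M_def Y_def by measurable
  have Y_bound: "\<bar>Y v\<bar> \<le> B / h" for v
    unfolding Y_def using K_bound h by (simp add: divide_right_mono)
  have mean: "integral\<^sup>L M Y = smoothed K h f x"
    unfolding M_def Y_def smoothed_def using f_nonneg
    by (subst integral_density) (auto simp: mult.commute)
  have second: "ennreal (\<integral>v. (Y v)\<^sup>2 \<partial>M) = (\<integral>\<^sup>+v. ennreal (f v * (K ((x - v) / h) / h)\<^sup>2) \<partial>lborel)"
  proof -
    have "integrable M (\<lambda>v. (Y v)\<^sup>2)"
    proof (rule M.integrable_const_bound[where B="B / h * (B / h)"])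
      have "norm ((Y v)\<^sup>2) \<le> B / h * (B / h)" for v
        using mult_mono[OF Y_bound[of v] Y_bound[of v]] Y_bound[of v]
        by (simp add: power2_eq_square abs_mult)
      then show "AE v in M. norm ((Y v)\<^sup>2) \<le> B / h * (B / h)" by simp
    qed (use Y_meas in simp)
    then have "ennreal (\<integral>v. (Y v)\<^sup>2 \<partial>M) = (\<integral>\<^sup>+v. ennreal ((Y v)\<^sup>2) \<partial>M)"
      by (subst nn_integral_eq_integral) auto
    also have "\<dots> = (\<integral>\<^sup>+v. ennreal (f v * (K ((x - v) / h) / h)\<^sup>2) \<partial>lborel)"
      unfolding M_def Y_def using f_nonneg by (subst nn_integral_density) (auto simp: ennreal_mult)
    finally show ?thesis .
  qed
  have "(\<integral>\<^sup>+X. ennreal ((kde n K h X x - f x)\<^sup>2) \<partial>sample_law n f)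
      = ennreal ((smoothed K h f x - f x)\<^sup>2 + ((\<integral>v. (Y v)\<^sup>2 \<partial>M) - (smoothed K h f x)\<^sup>2) / n)"
  proof -
    have "kde n K h X x = (1 / real n) * (\<Sum>i<n. Y (X i))" for X
      by (simp add: kde_def Y_def)
    then show ?thesis
      unfolding sample_law_def M_def[symmetric] mean[symmetric]
      by (simp only: sample_mean_mse[OF M Y_meas Y_bound n])
  qed
  also have "\<dots> \<le> ennreal ((smoothed K h f x - f x)\<^sup>2) + ennreal (1 / real n) * ennreal (\<integral>v. (Y v)\<^sup>2 \<partial>M)"
    using n by (simp add: ennreal_plus[symmetric] ennreal_mult[symmetric] divide_right_mono
                   del: ennreal_plus)
  finally show ?thesis unfolding second .
qed

lemma nn_integral_rescaled_square:
  fixes K :: "real \<Rightarrow> real"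
  assumes K2: "integrable lborel (\<lambda>u. (K u)\<^sup>2)" and h: "h > 0"
  shows "(\<integral>\<^sup>+x. ennreal ((K ((x - v) / h) / h)\<^sup>2) \<partial>lborel) = ennreal (Rsq K / h)"
proof -
  have [measurable]: "(\<lambda>u. (K u)\<^sup>2) \<in> borel_measurable borel"
    using K2 by (simp add: borel_measurable_integrable)
  have "(\<lambda>x. (K ((x - v) / h) / h)\<^sup>2) = (\<lambda>x. (K ((x - v) / h))\<^sup>2 / h / h)"
    by (simp add: power2_eq_square)
  moreover have "integrable lborel (\<lambda>x. (K ((x - v) / h))\<^sup>2 / h / h)"
    using integrable_rescaled[OF K2 h, of v] by (rule integrable_divide_zero)
  moreover have "(\<integral>x. (K ((x - v) / h))\<^sup>2 / h / h \<partial>lborel) = Rsq K / h"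
    using integral_rescaled[OF h, of "\<lambda>u. (K u)\<^sup>2" v]
    by (simp only: integral_divide_zero Rsq_def)
  ultimately show ?thesis
    by (subst nn_integral_eq_integral) auto
qed

lemma mise_bias_variance:
  fixes K f :: "real \<Rightarrow> real"
  assumes K: "is_kernel K" and f: "is_density f" and h: "h > 0" and n: "n \<ge> 1"
  shows "MISE n f K h
       \<le> (\<integral>\<^sup>+x. ennreal ((smoothed K h f x - f x)\<^sup>2) \<partial>lborel) + ennreal (1 / real n) * ennreal (Rsq K / h)"
proof -
  obtain B where K_bound: "\<And>u. \<bar>K u\<bar> \<le> B" and K2: "integrable lborel (\<lambda>u. (K u)\<^sup>2)"
    and K_int: "integrable lborel K"
    using K unfolding is_kernel_def by auto
  have [measurable]: "K \<in> borel_measurable borel"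
    using K_int by (simp add: borel_measurable_integrable)
  have [measurable]: "f \<in> borel_measurable borel" and f_nonneg: "\<And>v. 0 \<le> f v"
    and f_int: "integrable lborel f" and f_one: "integral\<^sup>L lborel f = 1"
    using f unfolding is_density_def by auto
  define P where "P = sample_law n f"
  interpret P: prob_space P
    unfolding P_def sample_law_def by (intro prob_space_PiM prob_space_density[OF f])
  interpret PL: pair_sigma_finite P lborel
    unfolding pair_sigma_finite_def using P.sigma_finite_measure lborel.sigma_finite_measure_axioms by simp
  have sm_meas[measurable]: "smoothed K h f \<in> borel_measurable borel"
    using phi_smoothed(1)[OF K_int f_int h] by (simp add: borel_measurable_integrable)
  have var_term: "(\<integral>\<^sup>+x. \<integral>\<^sup>+v. ennreal (f v * (K ((x - v) / h) / h)\<^sup>2) \<partial>lborel \<partial>lborel) = ennreal (Rsq K / h)"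
  proof -
    have "(\<integral>\<^sup>+x. \<integral>\<^sup>+v. ennreal (f v * (K ((x - v) / h) / h)\<^sup>2) \<partial>lborel \<partial>lborel)
        = (\<integral>\<^sup>+v. \<integral>\<^sup>+x. ennreal (f v) * ennreal ((K ((x - v) / h) / h)\<^sup>2) \<partial>lborel \<partial>lborel)"
      using f_nonneg by (subst lborel_pair.Fubini') (auto simp: ennreal_mult)
    also have "\<dots> = (\<integral>\<^sup>+v. ennreal (f v) * ennreal (Rsq K / h) \<partial>lborel)"
      by (simp add: nn_integral_cmult nn_integral_rescaled_square[OF K2 h])
    also have "\<dots> = ennreal (Rsq K / h)"
      using f_int f_nonneg f_one by (simp add: nn_integral_multc nn_integral_eq_integral)
    finally show ?thesis .
  qed
  have "MISE n f K h = (\<integral>\<^sup>+x. \<integral>\<^sup>+X. ennreal ((kde n K h X x - f x)\<^sup>2) \<partial>P \<partial>lborel)"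
  proof -
    have "(\<lambda>(X, x). ennreal ((kde n K h X x - f x)\<^sup>2)) \<in> borel_measurable (P \<Otimes>\<^sub>M lborel)"
      unfolding P_def sample_law_def kde_def by measurable
    then show ?thesis
      unfolding MISE_def P_def[symmetric]
      using PL.Fubini'[of "\<lambda>X x. ennreal ((kde n K h X x - f x)\<^sup>2)"] by simp
  qed
  also have "\<dots> \<le> (\<integral>\<^sup>+x. ennreal ((smoothed K h f x - f x)\<^sup>2)
      + ennreal (1 / real n) * (\<integral>\<^sup>+v. ennreal (f v * (K ((x - v) / h) / h)\<^sup>2) \<partial>lborel) \<partial>lborel)"
    unfolding P_def by (intro nn_integral_mono kde_pointwise_mse[OF _ K_bound f h n]) simp
  also have "\<dots> = (\<integral>\<^sup>+x. ennreal ((smoothed K h f x - f x)\<^sup>2) \<partial>lborel)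
      + ennreal (1 / real n) * ennreal (Rsq K / h)"
    by (simp add: nn_integral_add nn_integral_cmult var_term)
  finally show ?thesis .
qed

theorem mainTheorem5:
  fixes K f :: "real \<Rightarrow> real" and n :: nat
  assumes "is_kernel K"
    and "integrable lborel (\<lambda>x. (K x)\<^sup>2)"
    and "S_K K > 0"
    and "is_density f"
    and "integrable lborel (\<lambda>x. (f x)\<^sup>2)"
    and "0 < D_f f" and "D_f f < \<infinity>"
    and "1 \<le> n"
  shows "of_nat n * Phi n f K \<le> of_nat n * MISE n f K (S_K K / real_of_ereal (D_f f))
       \<and> of_nat n * MISE n f K (S_K K / real_of_ereal (D_f f))
           \<le> ennreal (real_of_ereal (D_f f) * Rsq K / S_K K)"
proof -
  obtain D where D: "D_f f = ereal D" and D_pos: "D > 0"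
    using assms(6,7) by (cases "D_f f") auto
  define h where "h = S_K K / D"
  have h: "h > 0" "h * D \<le> S_K K"
    using assms(3) D_pos by (simp_all add: h_def)
  have K_int: "integrable lborel K" and f_int: "integrable lborel f"
    using assms(1,4) by (simp_all add: is_kernel_def is_density_def)
  have unbiased: "AE x in lborel. ennreal ((smoothed K h f x - f x)\<^sup>2) = 0"
    using smoothed_unbiased[OF K_int f_int D h] by eventually_elim simp
  have no_bias: "(\<integral>\<^sup>+x. ennreal ((smoothed K h f x - f x)\<^sup>2) \<partial>lborel) = 0"
    using nn_integral_cong_AE[OF unbiased] by simp
  have "of_nat n * MISE n f K h \<le> of_nat n * (ennreal (1 / real n) * ennreal (Rsq K / h))"
    using mise_bias_variance[OF assms(1,4) h(1) assms(8)] by (intro mult_left_mono) (simp_all add: no_bias)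
  also have "\<dots> = ennreal (Rsq K / h)"
  proof -
    have "of_nat n * ennreal (1 / real n) = 1"
      using assms(8) by (simp add: ennreal_of_nat_eq_real_of_nat flip: ennreal_mult)
    then show ?thesis by (simp add: mult.assoc[symmetric])
  qed
  also have "\<dots> = ennreal (D * Rsq K / S_K K)"
    by (simp add: h_def mult.commute)
  finally have variance_bound: "of_nat n * MISE n f K h \<le> ennreal (D * Rsq K / S_K K)" .
  have "Phi n f K \<le> MISE n f K h"
    unfolding Phi_def using h(1) by (intro INF_lower) simp
  then show ?thesis
    using variance_bound mult_left_mono[of "Phi n f K" "MISE n f K h" "of_nat n"]
    by (simp add: D h_def)
qed

end
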